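(* Suppose we have $2$ agents with additive, identical, normalized valuations, provided with a $2$-value prediction of accuracy $\eta<1-\frac{1-a}{2}$ for some given $a\in(\sqrt3-1,1]$; that is, the allowed error between the prediction and the true valuation is $1-\eta>\frac{1-a}{2}$. Then there is no online algorithm that guarantees an $a$-EFX allocation for all instances with error at most $1-\eta$, even when $T'=T=4$.
   Context: Online fair division with predictions and identical valuations: goods $g_1,\dots,g_T$ arrive one per time step; both agents share a true additive normalized valuation $v$ ($v(g_t)\ge0$, $\sum_{t\in[T]}v(g_t)=1$, $v(S)=\sum_{g\in S}v(g)$), and before any arrival the algorithm receives a prediction $p=(p(g_1),\dots,p(g_{T'}))$ (an additive normalized valuation over $T'$ predicted goods) and the accuracy level. A $2$-value prediction takes at most $2$ distinct values. Error $\frac12\sum_{t=1}^{\max\{T,T'\}}|p(g_t)-v(g_t)|$ (missing entries set to $0$); accuracy $\eta$ means the error is at most $1-\eta$. At time $t$, $v(g_t)$ is revealed and $g_t$ must be irrevocably allocated. For $S\ne\emptyset$, $\bar S=S\setminus\{g\}$ with $g\in\arg\max_{g'\in S}v(S\setminus\{g'\})$, $\bar\emptyset=\emptyset$. An allocation is $a$-EFX if $v(A_i)\ge a\cdot v(\bar A_j)$ for all $i,j$. *)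

theory Defs
  imports Complex_Main
begin

text \<open>Goods are indexed 0,...,T-1; a valuation over T goods is a real list of length T.\<close>

definition normalized_val :: "nat \<Rightarrow> real list \<Rightarrow> bool" where
  "normalized_val T v \<longleftrightarrow> length v = T \<and> (\<forall>x\<in>set v. 0 \<le> x) \<and> sum_list v = 1"

definition k_value :: "nat \<Rightarrow> real list \<Rightarrow> bool" where
  "k_value k p \<longleftrightarrow> card (set p) \<le> k"

text \<open>Prediction error; missing entries are treated as 0.\<close>
definition pred_error :: "real list \<Rightarrow> real list \<Rightarrow> real" where
  "pred_error p v = (1/2) * (\<Sum>t<max (length p) (length v).
      \<bar>(if t < length p then p ! t else 0) - (if t < length v then v ! t else 0)\<bar>)"

definition setval :: "real list \<Rightarrow> nat set \<Rightarrow> real" where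
  "setval v S = (\<Sum>g\<in>S. v ! g)"

definition barval :: "real list \<Rightarrow> nat set \<Rightarrow> real" where
  "barval v S = (if S = {} then 0 else Max ((\<lambda>g. setval v (S - {g})) ` S))"

definition a_EFX :: "real \<Rightarrow> real list \<Rightarrow> (nat \<Rightarrow> nat set) \<Rightarrow> bool" where
  "a_EFX a v A \<longleftrightarrow> (\<forall>i\<in>{0,1::nat}. \<forall>j\<in>{0,1::nat}. setval v (A i) \<ge> a * barval v (A j))"

text \<open>A deterministic online algorithm receives the prediction p and the list of values
  revealed so far [v(g_1),...,v(g_t)], and returns True iff g_t is given to agent 0.
  Since it is deterministic, its earlier decisions are functions of the earlier prefixes.\<close>
definition online_alloc :: "(real list \<Rightarrow> real list \<Rightarrow> bool) \<Rightarrow> real list \<Rightarrow> real list \<Rightarrow> nat \<Rightarrow> nat set" where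
  "online_alloc alg p v i =
     (if i = 0 then {t. t < length v \<and> alg p (take (Suc t) v)}
      else {t. t < length v \<and> \<not> alg p (take (Suc t) v)})"

end

theory Submission
  imports Defs
begin

(* The adversary first reveals goods worth 1/5 - d and 1/5, consistent with the 2-value
   prediction [1/5, 1/5, 1/5, 2/5]. At that point a deterministic algorithm has committed to
   putting them into the same bundle or into different ones, and the adversary completes the
   instance accordingly: if they are together, mass moves from the last good to the third
   (paired_instance); if they are apart, the last good absorbs it (split_instance). Both
   completions are at error d + e from the prediction, and for a suitable split of an error
   d + e slightly above (1 - a)/2 every allocation consistent with the first commitment
   violates a-EFX. The construction works for every a >= 7/10, below sqrt 3 - 1. *)

definition hard_prediction :: "real list" where
  "hard_prediction = [1/5, 1/5, 1/5, 2/5]"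

definition paired_instance :: "real \<Rightarrow> real \<Rightarrow> real list" where
  "paired_instance d e = [1/5 - d, 1/5, 1/5 + d + e, 2/5 - e]"

definition split_instance :: "real \<Rightarrow> real \<Rightarrow> real list" where
  "split_instance d e = [1/5 - d, 1/5, 1/5 - e, 2/5 + d + e]"

definition efx_violation :: "real \<Rightarrow> real list \<Rightarrow> nat set \<Rightarrow> nat set \<Rightarrow> bool" where
  "efx_violation a v X Y \<longleftrightarrow> setval v X < a * barval v Y"

lemma efx_violationI:
  assumes "finite Y" "g \<in> Y" "0 \<le> a" "setval v X < a * setval v (Y - {g})"
  shows "efx_violation a v X Y"
proof -
  have "setval v (Y - {g}) \<le> barval v Y"
    using assms(1,2) unfolding barval_def by (auto intro!: Max_ge)
  then show ?thesis
    using assms(3,4) mult_left_mono unfolding efx_violation_def by fastforce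
qed

lemma not_a_EFX_if_violation:
  assumes "efx_violation a v (A 0) (A 1) \<or> efx_violation a v (A 1) (A 0)"
  shows "\<not> a_EFX a v A"
  using assms unfolding efx_violation_def a_EFX_def by force

lemma online_alloc_eq:
  "online_alloc alg p v = (\<lambda>i. {t. t < length v \<and> (alg p (take (Suc t) v) \<longleftrightarrow> i = 0)})"
  unfolding online_alloc_def by (rule ext) auto

lemma Collect_less_4_eq_filter:
  "{t::nat. t < 4 \<and> P t} = set (filter P [0,1,2,3])"
  unfolding set_filter by (auto simp: eval_nat_numeral less_Suc_eq)

context
  fixes a d e :: real
  assumes a: "7/10 \<le> a" and d: "0 \<le> d" and e: "0 \<le> e" and de: "d + e \<le> 1/6"
    and A: "2/5 - d < a * (2/5 - e)" and B: "2/5 - e < a * (2/5 + d + e)"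
begin

(* A and B are the binding cases: A for {0,1} against {2,3} in the paired instance, B for {3}
   against {0,1,2} (paired) and {1,2} against {0,3} (split); the rest only needs the bounds. *)

lemma paired_instance_violations:
  defines "v \<equiv> paired_instance d e"
  shows "efx_violation a v {0,1} {2,3}" "efx_violation a v {2} {0,1,3}"
    "efx_violation a v {3} {0,1,2}" "efx_violation a v {} {0,1,2,3}"
proof -
  have ad: "0 \<le> a * d" using a d by simp
  show "efx_violation a v {0,1} {2,3}"
    by (rule efx_violationI[where g=2])
      (use a A in \<open>simp_all add: v_def paired_instance_def setval_def algebra_simps\<close>)
  show "efx_violation a v {2} {0,1,3}"
    by (rule efx_violationI[where g=0])
      (use a A d e de in \<open>simp_all add: v_def paired_instance_def setval_def algebra_simps\<close>)
  show "efx_violation a v {3} {0,1,2}"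
    by (rule efx_violationI[where g=0])
      (use a B in \<open>simp_all add: v_def paired_instance_def setval_def algebra_simps\<close>)
  show "efx_violation a v {} {0,1,2,3}"
    by (rule efx_violationI[where g=0])
      (use a ad in \<open>auto simp: v_def paired_instance_def setval_def algebra_simps\<close>)
qed

lemma split_instance_violations:
  defines "v \<equiv> split_instance d e"
  shows "efx_violation a v {0} {1,2,3}" "efx_violation a v {1,2} {0,3}"
    "efx_violation a v {0,2} {1,3}" "efx_violation a v {1} {0,2,3}"
proof -
  have ad: "0 \<le> a * d" using a d by simp
  show "efx_violation a v {0} {1,2,3}"
    by (rule efx_violationI[where g=1])
      (use a in \<open>simp_all add: v_def split_instance_def setval_def ring_distribs\<close>,
        use a d ad in linarith)
  show "efx_violation a v {1,2} {0,3}"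
    by (rule efx_violationI[where g=0])
      (use a B in \<open>simp_all add: v_def split_instance_def setval_def algebra_simps\<close>)
  show "efx_violation a v {0,2} {1,3}"
    by (rule efx_violationI[where g=1])
      (use a d B in \<open>simp_all add: v_def split_instance_def setval_def algebra_simps\<close>)
  show "efx_violation a v {1} {0,2,3}"
    by (rule efx_violationI[where g=0])
      (use a ad in \<open>auto simp: v_def split_instance_def setval_def algebra_simps\<close>)
qed

lemma paired_instance_not_a_EFX:
  assumes "c 0 = c 1"
  shows "\<not> a_EFX a (paired_instance d e) (\<lambda>i. {t. t < 4 \<and> (c t \<longleftrightarrow> i = 0)})"
  using assms paired_instance_violations
  by (intro not_a_EFX_if_violation, cases "c 1"; cases "c 2"; cases "c 3")
    (simp_all add: Collect_less_4_eq_filter insert_commute)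

lemma split_instance_not_a_EFX:
  assumes "c 0 \<noteq> c 1"
  shows "\<not> a_EFX a (split_instance d e) (\<lambda>i. {t. t < 4 \<and> (c t \<longleftrightarrow> i = 0)})"
  using assms split_instance_violations
  by (intro not_a_EFX_if_violation, cases "c 1"; cases "c 2"; cases "c 3")
    (simp_all add: Collect_less_4_eq_filter insert_commute)

end

lemma hard_prediction_normalized: "normalized_val 4 hard_prediction"
  by (simp add: normalized_val_def hard_prediction_def)

lemma hard_prediction_two_valued: "k_value 2 hard_prediction"
  by (simp add: k_value_def hard_prediction_def)

lemma lessThan_4: "{..<4::nat} = {0,1,2,3}"
  by auto

lemma paired_instance_normalized:
  "0 \<le> d \<Longrightarrow> d \<le> 1/5 \<Longrightarrow> 0 \<le> e \<Longrightarrow> e \<le> 2/5 \<Longrightarrow> normalized_val 4 (paired_instance d e)"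
  by (simp add: normalized_val_def paired_instance_def)

lemma split_instance_normalized:
  "0 \<le> d \<Longrightarrow> d \<le> 1/5 \<Longrightarrow> 0 \<le> e \<Longrightarrow> e \<le> 1/5 \<Longrightarrow> normalized_val 4 (split_instance d e)"
  by (simp add: normalized_val_def split_instance_def)

lemma pred_error_paired_instance:
  "0 \<le> d \<Longrightarrow> 0 \<le> e \<Longrightarrow> pred_error hard_prediction (paired_instance d e) = d + e"
  by (simp add: pred_error_def hard_prediction_def paired_instance_def lessThan_4)

lemma pred_error_split_instance:
  "0 \<le> d \<Longrightarrow> 0 \<le> e \<Longrightarrow> pred_error hard_prediction (split_instance d e) = d + e"
  by (simp add: pred_error_def hard_prediction_def split_instance_def lessThan_4)

lemma hard_parameters_exist:
  fixes a r :: real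
  assumes "7/10 \<le> a" "a \<le> 1" "(1 - a) / 2 < r"
  obtains d e where "0 \<le> d" "0 \<le> e" "d + e \<le> 1/6" "d + e \<le> r"
    "2/5 - d < a * (2/5 - e)" "2/5 - e < a * (2/5 + d + e)"
proof -
  (* The error budget exceeds b/2. Splitting b/2 as 9 : 1 between d and e leaves A short only
     by the term b^2/20 and turns B into b (3/20 - b/2) > 0, i.e. b < 3/10; the slack t > 0
     makes both strict. *)
  define b where "b = 1 - a"
  define t where "t = min (r - b/2) (1/60)"
  have b: "0 \<le> b" "b \<le> 3/10"
    using assms by (simp_all add: b_def)
  have t: "0 < t" "t \<le> 1/60" "t \<le> r - b/2"
    using assms by (auto simp: b_def t_def min_def)
  have products: "0 \<le> b * b" "b * b \<le> 3/10 * b" "0 \<le> b * t" "b * t \<le> 3/10 * t"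
    using mult_right_mono[OF b(2)] b(1) t(1) by simp_all
  have a: "a = 1 - b"
    by (simp add: b_def)
  show ?thesis
  proof (rule that[of "9/20 * b + 3/4 * t" "b/20 + t/4"])
    show "2/5 - (9/20 * b + 3/4 * t) < a * (2/5 - (b/20 + t/4))"
      unfolding a ring_distribs using products b t by linarith
    show "2/5 - (b/20 + t/4) < a * (2/5 + (9/20 * b + 3/4 * t) + (b/20 + t/4))"
      unfolding a ring_distribs using products b t by linarith
  qed (use b t in auto)
qed

lemma no_online_algorithm_a_EFX:
  fixes a r :: real
  assumes "7/10 \<le> a" "a \<le> 1" "(1 - a) / 2 < r"
  shows "\<exists>p v. normalized_val 4 p \<and> k_value 2 p \<and> normalized_val 4 v
           \<and> pred_error p v \<le> r \<and> \<not> a_EFX a v (online_alloc alg p v)"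
proof -
  obtain d e where d: "0 \<le> d" and e: "0 \<le> e" and small: "d + e \<le> 1/6" and error: "d + e \<le> r"
    and A: "2/5 - d < a * (2/5 - e)" and B: "2/5 - e < a * (2/5 + d + e)"
    using hard_parameters_exist[OF assms] by blast
  let ?p = hard_prediction
  define v where "v = (if alg ?p [1/5 - d] = alg ?p [1/5 - d, 1/5]
    then paired_instance d e else split_instance d e)"
  define c where "c t = alg ?p (take (Suc t) v)" for t
  have c01: "c 0 = alg ?p [1/5 - d]" "c 1 = alg ?p [1/5 - d, 1/5]"
    by (simp_all add: c_def v_def paired_instance_def split_instance_def)
  have "length v = 4"
    by (simp add: v_def paired_instance_def split_instance_def)
  then have "online_alloc alg ?p v = (\<lambda>i. {t. t < 4 \<and> (c t \<longleftrightarrow> i = 0)})"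
    unfolding online_alloc_eq c_def by simp
  moreover have "\<not> a_EFX a v (\<lambda>i. {t. t < 4 \<and> (c t \<longleftrightarrow> i = 0)})"
  proof (cases "c 0 = c 1")
    case True
    then have "v = paired_instance d e"
      using c01 by (simp add: v_def)
    then show ?thesis
      using paired_instance_not_a_EFX[OF assms(1) d e small A B True] by simp
  next
    case False
    then have "v = split_instance d e"
      using c01 by (simp add: v_def)
    then show ?thesis
      using split_instance_not_a_EFX[OF assms(1) d e small A B False] by simp
  qed
  moreover have "normalized_val 4 v" "pred_error ?p v \<le> r"
    using d e small error
    by (simp_all add: v_def paired_instance_normalized split_instance_normalized
        pred_error_paired_instance pred_error_split_instance)
  ultimately show ?thesis
    using hard_prediction_normalized hard_prediction_two_valued by metis
qed

theorem theorem4p16: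
  fixes a \<eta> :: real
  assumes "sqrt 3 - 1 < a" and "a \<le> 1"
    and "\<eta> < 1 - (1 - a) / 2"
  shows "\<forall>alg :: real list \<Rightarrow> real list \<Rightarrow> bool.
           \<exists>p v. normalized_val 4 p \<and> k_value 2 p \<and> normalized_val 4 v
             \<and> pred_error p v \<le> 1 - \<eta>
             \<and> \<not> a_EFX a v (online_alloc alg p v)"
proof
  fix alg :: "real list \<Rightarrow> real list \<Rightarrow> bool"
  have "17/10 < sqrt 3"
    by (rule real_less_rsqrt) (simp add: power2_eq_square)
  then have "7/10 \<le> a"
    using assms(1) by linarith
  moreover have "(1 - a) / 2 < 1 - \<eta>"
    using assms(3) by linarith
  ultimately show "\<exists>p v. normalized_val 4 p \<and> k_value 2 p \<and> normalized_val 4 v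
      \<and> pred_error p v \<le> 1 - \<eta> \<and> \<not> a_EFX a v (online_alloc alg p v)"
    using no_online_algorithm_a_EFX assms(2) by blast
qed

end
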